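(* For any $x\in\mathbb{R}^d$, any probability measure $\mu$ on $\mathbb{R}^d$ (with mean $\bar\mu$) and any $r>0$, there exists a unique global strong solution $(X_t,t\ge0)$ of $\mathrm{d}X_t=\mathrm{d}B_t-g(t)\nabla V(X_t-\bar\mu_t)\,\mathrm{d}t$, $X_0=x$, where $\bar\mu_t=\frac{1}{r+t}\big(r\bar\mu+\int_0^tX_s\,\mathrm{d}s\big)$.
   Context: $B$ is a standard $d$-dimensional Brownian motion. The potential $V:\mathbb{R}^d\to[0,\infty)$ is $C^2$ and $V=W+\chi$, where $\chi$ is compactly supported with $\nabla\chi$ Lipschitz and there is $c>0$ with $\nabla^2W(x)\ge c\,\mathrm{Id}$ for all $x$; moreover there is $a>0$ with $\Delta V(x)\le a(1+V(x))$ for all $x$ and $|\nabla V(x)|^2/V(x)\to\infty$ as $|x|\to\infty$. $V$ has finitely many critical points; its local minima have positive definite Hessian, and at each other critical point $\nabla^2V$ has a negative eigenvalue. The function $g:[0,\infty)\to(0,\infty)$ is $C^1$ and non-decreasing. The measure $\mu$ is assumed to have a mean $\bar\mu$. *)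

theory Defs
  imports "HOL-Probability.Probability"
begin

text \<open>Standard Brownian motion in a Euclidean space (identified with R^d via an
orthonormal basis): B_0 = 0, all paths continuous on [0,oo), and for every finite
increasing time grid 0 <= t_0 < t_1 < ... < t_n the coordinates (w.r.t. the
orthonormal basis) of the increments are independent, each
N(0, t_(i+1) - t_i).\<close>

definition std_BM :: "'w measure \<Rightarrow> (real \<Rightarrow> 'w \<Rightarrow> 'a::euclidean_space) \<Rightarrow> bool" where
  "std_BM M B \<longleftrightarrow>
     prob_space M \<and>
     (\<forall>t\<ge>0. B t \<in> borel_measurable M) \<and>
     (\<forall>\<omega>\<in>space M. B 0 \<omega> = 0 \<and> continuous_on {0..} (\<lambda>t. B t \<omega>)) \<and>
     (\<forall>(ts::nat \<Rightarrow> real) n. (0 \<le> ts 0 \<and> (\<forall>i<n. ts i < ts (Suc i))) \<longrightarrow>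
        prob_space.indep_vars M (\<lambda>_. borel)
          (\<lambda>(i, b) \<omega>. (B (ts (Suc i)) \<omega> - B (ts i) \<omega>) \<bullet> b) ({..<n} \<times> Basis) \<and>
        (\<forall>i<n. \<forall>b\<in>Basis.
           distributed M lborel (\<lambda>\<omega>. (B (ts (Suc i)) \<omega> - B (ts i) \<omega>) \<bullet> b)
             (\<lambda>y. ennreal (normal_density 0 (sqrt (ts (Suc i) - ts i)) y))))"

definition BM_filtration :: "'w measure \<Rightarrow> (real \<Rightarrow> 'w \<Rightarrow> 'a::euclidean_space) \<Rightarrow> real \<Rightarrow> 'w set set" where
  "BM_filtration M B t = sigma_sets (space M)
     ({B s -` A \<inter> space M | s A. 0 \<le> s \<and> s \<le> t \<and> A \<in> sets borel} \<union> null_sets M)"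

definition strong_solution ::
  "'w measure \<Rightarrow> (real \<Rightarrow> 'w \<Rightarrow> 'a::euclidean_space) \<Rightarrow> (real \<Rightarrow> real) \<Rightarrow> ('a \<Rightarrow> 'a)
   \<Rightarrow> 'a \<Rightarrow> 'a \<Rightarrow> real \<Rightarrow> (real \<Rightarrow> 'w \<Rightarrow> 'a) \<Rightarrow> bool" where
  "strong_solution M B g gradV x mbar r X \<longleftrightarrow>
     (\<forall>\<omega>\<in>space M. continuous_on {0..} (\<lambda>t. X t \<omega>)) \<and>
     (\<forall>t\<ge>0. \<forall>A\<in>sets borel. X t -` A \<inter> space M \<in> BM_filtration M B t) \<and>
     (AE \<omega> in M. \<forall>t\<ge>0.
        X t \<omega> = x + B t \<omega> -
          integral {0..t} (\<lambda>s. g s *\<^sub>R gradV (X s \<omega> -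
             (1 / (r + s)) *\<^sub>R (r *\<^sub>R mbar + integral {0..s} (\<lambda>u. X u \<omega>)))))"

definition local_min :: "('a::real_normed_vector \<Rightarrow> real) \<Rightarrow> 'a \<Rightarrow> bool" where
  "local_min f x \<longleftrightarrow> (\<exists>e>0. \<forall>y\<in>ball x e. f x \<le> f y)"

end

theory Submission
  imports Defs
begin

text \<open>The equation is solved path by path: for a fixed continuous Brownian path \<open>b\<close> it is the
  integral equation \<open>X = x + b - \<integral> g \<nabla>V(X - \<mu>(X))\<close>, where the running mean \<open>\<mu>(X)\<close> at time \<open>t\<close>
  depends only on \<open>X\<close> on \<open>[0,t]\<close>. For a globally Lipschitz drift, Picard iteration converges
  uniformly on compact intervals (the running means are no further apart than the paths), giving
  the unique continuous solution. \<open>\<nabla>V\<close> is only locally Lipschitz, so it is replaced by its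
  truncation \<open>\<nabla>V \<circ> \<pi>\<^sub>R\<close>, \<open>\<pi>\<^sub>R\<close> the projection onto the ball of radius \<open>R\<close>. Strong convexity of \<open>W\<close>
  and boundedness of \<open>\<nabla>\<chi>\<close> make \<open>X - \<mu>(X) - b\<close> drift inwards outside a ball whose radius does not
  depend on \<open>R\<close>, so for large \<open>R\<close> the truncation is never active and the truncated solutions
  stabilise. The Picard iterates are adapted to the augmented Brownian filtration, hence so is
  the solution.\<close>

section \<open>The integral equation for a fixed path\<close>

definition running_mean :: "real \<Rightarrow> 'a::euclidean_space \<Rightarrow> (real \<Rightarrow> 'a) \<Rightarrow> real \<Rightarrow> 'a" where
  "running_mean r m X s = (1 / (r + s)) *\<^sub>R (r *\<^sub>R m + integral {0..s} X)"

definition picard_map :: "(real \<Rightarrow> real) \<Rightarrow> ('a::euclidean_space \<Rightarrow> 'a) \<Rightarrow> 'a \<Rightarrow> 'a \<Rightarrow> real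
    \<Rightarrow> (real \<Rightarrow> 'a) \<Rightarrow> (real \<Rightarrow> 'a) \<Rightarrow> real \<Rightarrow> 'a" where
  "picard_map g F x m r b X t =
     x + b t - integral {0..t} (\<lambda>s. g s *\<^sub>R F (X s - running_mean r m X s))"

lemma continuous_on_running_mean:
  assumes "continuous_on {0..T} X" "r > 0"
  shows "continuous_on {0..T} (running_mean r m X)"
  unfolding running_mean_def using assms
  by (intro continuous_intros indefinite_integral_continuous_1 integrable_continuous_real) auto

lemma continuous_on_picard_map:
  assumes "continuous_on {0..T} X" "r > 0" "continuous_on {0..T} g"
    and "continuous_on UNIV F" "continuous_on {0..T} b"
  shows "continuous_on {0..T} (picard_map g F x m r b X)"
proof -
  have "continuous_on {0..T} (\<lambda>s. g s *\<^sub>R F (X s - running_mean r m X s))"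
    using assms by (intro continuous_on_scaleR continuous_on_compose2[OF assms(4)]
        continuous_on_diff continuous_on_running_mean) auto
  then show ?thesis unfolding picard_map_def using assms(5)
    by (intro continuous_on_diff continuous_on_add continuous_on_const
        indefinite_integral_continuous_1 integrable_continuous_real)
qed

lemma running_mean_cong:
  assumes "\<And>u. u \<in> {0..s} \<Longrightarrow> X u = Y u"
  shows "running_mean r m X s = running_mean r m Y s"
proof -
  have "integral {0..s} X = integral {0..s} Y" using assms by (intro integral_cong) auto
  then show ?thesis unfolding running_mean_def by simp
qed

lemma picard_map_cong:
  assumes "\<And>s. s \<in> {0..t} \<Longrightarrow> X s = Y s"
  shows "picard_map g F x m r b X t = picard_map g F x m r b Y t"
  unfolding picard_map_def using assms running_mean_cong[of _ X Y]
  by (auto intro!: integral_cong)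

lemma picard_map_cong_drift:
  assumes "\<And>s. s \<in> {0..t} \<Longrightarrow> F1 (X s - running_mean r m X s) = F2 (X s - running_mean r m X s)"
  shows "picard_map g F1 x m r b X t = picard_map g F2 x m r b X t"
  unfolding picard_map_def using assms by (auto intro!: integral_cong)

lemma running_mean_has_vector_derivative:
  assumes X: "continuous_on {0..T} X" and r: "r > 0" and t: "t \<in> {0..T}"
  shows "(running_mean r m X has_vector_derivative (1 / (r + t)) *\<^sub>R (X t - running_mean r m X t))
           (at t within {0..T})"
proof -
  have rt: "r + t \<noteq> 0" using r t by simp
  have "((\<lambda>t. (1 / (r + t)) *\<^sub>R (r *\<^sub>R m + integral {0..t} X)) has_vector_derivative
      (1 / (r + t)) *\<^sub>R X t + (- 1 / (r + t)^2) *\<^sub>R (r *\<^sub>R m + integral {0..t} X)) (at t within {0..T})"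
    using rt by (auto intro!: derivative_eq_intros integral_has_vector_derivative[OF X t]
        simp: power2_eq_square field_simps)
  moreover have "(1 / (r + t)) *\<^sub>R X t + (- 1 / (r + t)^2) *\<^sub>R (r *\<^sub>R m + integral {0..t} X)
      = (1 / (r + t)) *\<^sub>R (X t - running_mean r m X t)"
    unfolding running_mean_def using rt by (simp add: power2_eq_square scaleR_diff_right)
  ultimately show ?thesis unfolding running_mean_def[abs_def] by simp
qed

lemma fixed_point_deviation_has_vector_derivative:
  assumes X: "continuous_on {0..T} X" and r: "r > 0" and g: "continuous_on {0..T} g"
    and F: "continuous_on UNIV F"
    and X_fix: "\<And>t. t \<in> {0..T} \<Longrightarrow> X t = picard_map g F x m r b X t" and \<tau>: "\<tau> \<in> {0..T}"
  shows "((\<lambda>t. X t - running_mean r m X t - b t) has_vector_derivative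
      - (g \<tau> *\<^sub>R F (X \<tau> - running_mean r m X \<tau>)) - (1 / (r + \<tau>)) *\<^sub>R (X \<tau> - running_mean r m X \<tau>))
      (at \<tau> within {0..T})"
proof -
  define h where "h s = g s *\<^sub>R F (X s - running_mean r m X s)" for s
  have "continuous_on {0..T} (\<lambda>s. F (X s - running_mean r m X s))"
    by (rule continuous_on_compose2[OF F continuous_on_diff[OF X continuous_on_running_mean[OF X r]]])
      auto
  then have hc: "continuous_on {0..T} h" unfolding h_def by (rule continuous_on_scaleR[OF g])
  have deriv: "((\<lambda>t. x - integral {0..t} h - running_mean r m X t) has_vector_derivative
      - h \<tau> - (1 / (r + \<tau>)) *\<^sub>R (X \<tau> - running_mean r m X \<tau>)) (at \<tau> within {0..T})"
    using has_vector_derivative_diff[OF has_vector_derivative_diff[OF has_vector_derivative_const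
          integral_has_vector_derivative[OF hc \<tau>]] running_mean_has_vector_derivative[OF X r \<tau>]]
    by simp
  have eq: "X t - running_mean r m X t - b t = x - integral {0..t} h - running_mean r m X t"
    if "t \<in> {0..T}" for t
    using X_fix[OF that] unfolding picard_map_def h_def by (simp add: algebra_simps)
  show ?thesis
    using has_vector_derivative_transform[where g = "\<lambda>t. X t - running_mean r m X t - b t",
        OF \<tau> eq deriv]
    unfolding h_def .
qed

lemma norm_running_mean_diff_le:
  assumes r: "r > 0" and s: "0 \<le> s"
    and X: "continuous_on {0..s} X" and Y: "continuous_on {0..s} Y"
    and XY: "\<And>u. u \<in> {0..s} \<Longrightarrow> norm (X u - Y u) \<le> D"
  shows "norm (running_mean r m X s - running_mean r m Y s) \<le> D"
proof -
  have D: "0 \<le> D" using XY[of 0] s by (auto intro: order_trans[OF norm_ge_zero])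
  have "norm (integral {0..s} (\<lambda>u. X u - Y u)) \<le> D * s"
    using integral_norm_bound_integral[of "\<lambda>u. X u - Y u" "{0..s}" "\<lambda>_. D"] X Y XY s
    by (simp add: integrable_continuous_real continuous_on_diff mult.commute)
  moreover have "running_mean r m X s - running_mean r m Y s
      = (1 / (r + s)) *\<^sub>R integral {0..s} (\<lambda>u. X u - Y u)"
    unfolding running_mean_def using X Y
    by (simp add: integral_diff integrable_continuous_real algebra_simps)
  moreover have "D * s / (r + s) \<le> D"
    using r s D by (simp add: divide_le_eq mult_left_mono)
  ultimately have "norm (running_mean r m X s - running_mean r m Y s) \<le> D * s / (r + s)"
    using r s by (simp add: divide_right_mono)
  with \<open>D * s / (r + s) \<le> D\<close> show ?thesis by linarith
qed

section \<open>Picard iteration for a Lipschitz drift\<close>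

lemma has_integral_power_div_fact:
  fixes A t :: real
  assumes "0 \<le> t"
  shows "((\<lambda>s. A * s ^ k / fact k) has_integral A * t ^ Suc k / fact (Suc k)) {0..t}"
proof -
  have "((\<lambda>s. A * s ^ k / fact k) has_integral
      A * t ^ Suc k / fact (Suc k) - A * 0 ^ Suc k / fact (Suc k)) {0..t}"
  proof (rule fundamental_theorem_of_calculus[OF assms])
    fix s :: real
    have "((\<lambda>s. A * s ^ Suc k / fact (Suc k)) has_real_derivative
        A * (real (Suc k) * s ^ k) / fact (Suc k)) (at s within {0..t})"
      by (intro derivative_eq_intros) auto
    moreover have "A * (real (Suc k) * s ^ k) / fact (Suc k) = A * s ^ k / fact k"
      unfolding fact_Suc by (simp add: divide_simps del: of_nat_Suc)
    ultimately show "((\<lambda>s. A * s ^ Suc k / fact (Suc k)) has_vector_derivative A * s ^ k / fact k)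
        (at s within {0..t})"
      by (simp add: has_real_derivative_iff_has_vector_derivative)
  qed
  then show ?thesis by simp
qed

text \<open>The factor 2 accounts for the running means, which are no further apart than the paths.\<close>

lemma norm_picard_integrand_diff_le:
  fixes X Y :: "real \<Rightarrow> 'a::euclidean_space"
  assumes r: "r > 0" and s: "0 \<le> s" and \<gamma>: "0 \<le> \<gamma>" "\<gamma> \<le> G" and F: "L-lipschitz_on UNIV F"
    and X: "continuous_on {0..s} X" and Y: "continuous_on {0..s} Y"
    and XY: "\<And>u. u \<in> {0..s} \<Longrightarrow> norm (X u - Y u) \<le> D"
  shows "norm (\<gamma> *\<^sub>R F (X s - running_mean r m X s) - \<gamma> *\<^sub>R F (Y s - running_mean r m Y s))
           \<le> 2 * G * L * D"
proof -
  let ?mX = "running_mean r m X s" and ?mY = "running_mean r m Y s"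
  have "norm ((X s - ?mX) - (Y s - ?mY)) = norm ((X s - Y s) - (?mX - ?mY))"
    by (simp add: algebra_simps)
  also have "\<dots> \<le> norm (X s - Y s) + norm (?mX - ?mY)" by (rule norm_triangle_ineq4)
  also have "\<dots> \<le> D + D"
    using XY[of s] s norm_running_mean_diff_le[OF r s X Y XY] by (intro add_mono) auto
  finally have dev: "norm ((X s - ?mX) - (Y s - ?mY)) \<le> D + D" .
  have "norm (\<gamma> *\<^sub>R F (X s - ?mX) - \<gamma> *\<^sub>R F (Y s - ?mY)) = \<gamma> * norm (F (X s - ?mX) - F (Y s - ?mY))"
    using \<gamma> by (simp flip: scaleR_diff_right)
  also have "\<dots> \<le> G * (L * norm ((X s - ?mX) - (Y s - ?mY)))"
    using \<gamma> lipschitz_on_normD[OF F] by (intro mult_mono) auto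
  also have "\<dots> \<le> G * (L * (D + D))"
    using dev \<gamma> lipschitz_on_nonneg[OF F] by (intro mult_left_mono) auto
  finally show ?thesis by (simp add: algebra_simps)
qed

lemma norm_picard_map_diff_le:
  fixes X Y :: "real \<Rightarrow> 'a::euclidean_space"
  assumes r: "r > 0" and t: "0 \<le> t" and g: "continuous_on {0..t} g"
    and gG: "\<And>s. s \<in> {0..t} \<Longrightarrow> 0 \<le> g s \<and> g s \<le> G"
    and F: "L-lipschitz_on UNIV F"
    and X: "continuous_on {0..t} X" and Y: "continuous_on {0..t} Y" and C: "0 \<le> C"
    and XY: "\<And>s. s \<in> {0..t} \<Longrightarrow> norm (X s - Y s) \<le> C * (2 * G * L * s) ^ k / fact k"
  shows "norm (picard_map g F x m r b X t - picard_map g F x m r b Y t)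
           \<le> C * (2 * G * L * t) ^ Suc k / fact (Suc k)"
proof -
  define K where "K = 2 * G * L"
  define h where "h Z s = g s *\<^sub>R F (Z s - running_mean r m Z s)" for Z s
  have K: "0 \<le> K" unfolding K_def using gG[of 0] t lipschitz_on_nonneg[OF F] by auto
  have Fc: "continuous_on UNIV F" using F by (rule lipschitz_on_continuous_on)
  have hc: "continuous_on {0..t} (h Z)" if "continuous_on {0..t} Z" for Z
    unfolding h_def
    by (intro continuous_intros g continuous_on_compose2[OF Fc] that continuous_on_running_mean r) auto
  have bound: "norm (h X s - h Y s) \<le> C * K ^ Suc k * s ^ k / fact k" if s: "s \<in> {0..t}" for s
  proof -
    have XYs: "norm (X u - Y u) \<le> C * (K * s) ^ k / fact k" if u: "u \<in> {0..s}" for u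
    proof -
      have "norm (X u - Y u) \<le> C * (K * u) ^ k / fact k" using XY[of u] u s by (auto simp: K_def)
      also have "\<dots> \<le> C * (K * s) ^ k / fact k"
        using u K C by (intro divide_right_mono mult_left_mono power_mono mult_left_mono) auto
      finally show ?thesis .
    qed
    have "{0..s} \<subseteq> {0..t}" using s by auto
    then have "norm (h X s - h Y s) \<le> 2 * G * L * (C * (K * s) ^ k / fact k)"
      unfolding h_def using s gG[OF s]
      by (intro norm_picard_integrand_diff_le[OF r _ _ _ F continuous_on_subset[OF X]
            continuous_on_subset[OF Y] XYs]) auto
    also have "\<dots> = C * K ^ Suc k * s ^ k / fact k"
      unfolding K_def by (simp add: power_mult_distrib algebra_simps)
    finally show ?thesis .
  qed
  have "picard_map g F x m r b X t - picard_map g F x m r b Y t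
      = integral {0..t} (\<lambda>s. h Y s - h X s)"
    unfolding picard_map_def h_def[symmetric]
    using integral_diff[OF integrable_continuous_real[OF hc[OF Y]] integrable_continuous_real[OF hc[OF X]]]
    by simp
  moreover have "norm (integral {0..t} (\<lambda>s. h Y s - h X s))
      \<le> integral {0..t} (\<lambda>s. C * K ^ Suc k * s ^ k / fact k)"
    using bound has_integral_power_div_fact[OF t, of "C * K ^ Suc k" k] hc[OF X] hc[OF Y]
    by (intro integral_norm_bound_integral)
      (auto intro: integrable_diff integrable_continuous_real simp: norm_minus_commute)
  moreover have "integral {0..t} (\<lambda>s. C * K ^ Suc k * s ^ k / fact k)
      = C * (K * t) ^ Suc k / fact (Suc k)"
    using integral_unique[OF has_integral_power_div_fact[OF t]] by (simp add: power_mult_distrib)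
  ultimately show ?thesis unfolding K_def by simp
qed

primrec picard_iter :: "(real \<Rightarrow> real) \<Rightarrow> ('a::euclidean_space \<Rightarrow> 'a) \<Rightarrow> 'a \<Rightarrow> 'a \<Rightarrow> real
    \<Rightarrow> (real \<Rightarrow> 'a) \<Rightarrow> nat \<Rightarrow> real \<Rightarrow> 'a" where
  "picard_iter g F x m r b 0 = (\<lambda>t. x)"
| "picard_iter g F x m r b (Suc k) = picard_map g F x m r b (picard_iter g F x m r b k)"

definition picard_limit :: "(real \<Rightarrow> real) \<Rightarrow> ('a::euclidean_space \<Rightarrow> 'a) \<Rightarrow> 'a \<Rightarrow> 'a \<Rightarrow> real
    \<Rightarrow> (real \<Rightarrow> 'a) \<Rightarrow> real \<Rightarrow> 'a" where
  "picard_limit g F x m r b t = lim (\<lambda>k. picard_iter g F x m r b k t)"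

locale picard =
  fixes g :: "real \<Rightarrow> real" and F :: "'a::euclidean_space \<Rightarrow> 'a" and x m :: 'a
    and r L :: real and b :: "real \<Rightarrow> 'a"
  assumes r_pos: "r > 0" and g_cont: "continuous_on {0..} g"
    and g_nonneg: "\<And>t. t \<ge> 0 \<Longrightarrow> g t \<ge> 0"
    and F_lipschitz: "L-lipschitz_on UNIV F"
    and b_cont: "continuous_on {0..} b"
begin

abbreviation "\<Gamma> \<equiv> picard_map g F x m r b"
abbreviation "P \<equiv> picard_iter g F x m r b"
abbreviation "S \<equiv> picard_limit g F x m r b"

lemma F_cont: "continuous_on UNIV F"
  using F_lipschitz by (rule lipschitz_on_continuous_on)

lemma g_bounded: "\<exists>G\<ge>0. \<forall>s\<in>{0..T}. 0 \<le> g s \<and> g s \<le> G"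
proof -
  have "continuous_on {0..T} g" using g_cont by (rule continuous_on_subset) auto
  then obtain G where "0 \<le> G" "\<And>s. s \<in> {0..T} \<Longrightarrow> norm (g s) \<le> G"
    using continuous_on_compact_bound[OF compact_Icc] by blast
  then show ?thesis using g_nonneg by (intro exI[of _ G]) auto
qed

lemma continuous_on_Gamma:
  "continuous_on {0..T} X \<Longrightarrow> continuous_on {0..T} (\<Gamma> X)"
  using F_cont r_pos continuous_on_subset[OF g_cont] continuous_on_subset[OF b_cont]
  by (intro continuous_on_picard_map) auto

lemma continuous_on_picard_iter: "continuous_on {0..T} (P k)"
  by (induction k) (auto intro: continuous_on_Gamma)

lemma continuous_on_picard_integrand:
  "continuous_on {0..T} (\<lambda>s. g s *\<^sub>R F (P k s - running_mean r m (P k) s))"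
proof -
  have "continuous_on {0..T} (\<lambda>s. F (P k s - running_mean r m (P k) s))"
    by (rule continuous_on_compose2[OF F_cont continuous_on_diff[OF continuous_on_picard_iter
          continuous_on_running_mean[OF continuous_on_picard_iter r_pos]]]) auto
  then show ?thesis using g_cont by (intro continuous_on_scaleR) (auto intro: continuous_on_subset)
qed

lemma norm_iterates_diff_le:
  fixes U V :: "nat \<Rightarrow> real \<Rightarrow> 'a"
  assumes G: "\<forall>s\<in>{0..T}. 0 \<le> g s \<and> g s \<le> G"
    and U: "\<And>k. continuous_on {0..T} (U k)" and V: "\<And>k. continuous_on {0..T} (V k)"
    and U_step: "\<And>k t. t \<in> {0..T} \<Longrightarrow> U (Suc k) t = \<Gamma> (U k) t"
    and V_step: "\<And>k t. t \<in> {0..T} \<Longrightarrow> V (Suc k) t = \<Gamma> (V k) t"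
    and C: "0 \<le> C" "\<And>t. t \<in> {0..T} \<Longrightarrow> norm (U 0 t - V 0 t) \<le> C"
  shows "t \<in> {0..T} \<Longrightarrow> norm (U k t - V k t) \<le> C * (2 * G * L * t) ^ k / fact k"
proof (induction k arbitrary: t)
  case 0
  then show ?case using C by simp
next
  case (Suc k)
  have "norm (\<Gamma> (U k) t - \<Gamma> (V k) t) \<le> C * (2 * G * L * t) ^ Suc k / fact (Suc k)"
    using Suc G U V C(1) continuous_on_subset[OF g_cont]
    by (intro norm_picard_map_diff_le[OF r_pos _ _ _ F_lipschitz])
      (auto intro: continuous_on_subset[OF U] continuous_on_subset[OF V])
  then show ?case using U_step V_step Suc.prems by simp
qed

lemma picard_iter_diff_le:
  "\<exists>C K. 0 \<le> C \<and> 0 \<le> K \<and> (\<forall>k. \<forall>t\<in>{0..T}. norm (P (Suc k) t - P k t) \<le> C * (K * t) ^ k / fact k)"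
proof -
  obtain G where G0: "0 \<le> G" and G: "\<forall>s\<in>{0..T}. 0 \<le> g s \<and> g s \<le> G"
    using g_bounded by blast
  obtain C where C: "C \<ge> 0" "\<And>t. t \<in> {0..T} \<Longrightarrow> norm (P 1 t - P 0 t) \<le> C"
    using continuous_on_compact_bound[OF compact_Icc continuous_on_diff[OF continuous_on_picard_iter
          continuous_on_picard_iter]] by blast
  have "norm (P (Suc k) t - P k t) \<le> C * (2 * G * L * t) ^ k / fact k" if "t \<in> {0..T}" for k t
    using G continuous_on_picard_iter C that
    by (intro norm_iterates_diff_le[where U = "\<lambda>k. P (Suc k)" and V = P])
      (auto intro: continuous_on_Gamma)
  moreover have "0 \<le> 2 * G * L"
    using G0 lipschitz_on_nonneg[OF F_lipschitz] by simp
  ultimately show ?thesis using C by blast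
qed

lemma uniform_limit_picard_iter: "uniform_limit {0..T} P S sequentially"
proof -
  obtain C K where CK: "0 \<le> C" "0 \<le> K"
    and diff: "\<And>k t. t \<in> {0..T} \<Longrightarrow> norm (P (Suc k) t - P k t) \<le> C * (K * t) ^ k / fact k"
    using picard_iter_diff_le by blast
  have M: "norm (P (Suc k) t - P k t) \<le> C * ((K * T) ^ k / fact k)" if "t \<in> {0..T}" for k t
  proof -
    have "norm (P (Suc k) t - P k t) \<le> C * (K * t) ^ k / fact k" using diff that .
    also have "\<dots> \<le> C * (K * T) ^ k / fact k"
      using that CK by (intro divide_right_mono mult_left_mono power_mono mult_left_mono) auto
    finally show ?thesis by simp
  qed
  have "summable (\<lambda>k. (K * T) ^ k / fact k)"
    using summable_exp_generic[of "K * T"] by (simp add: divide_inverse mult.commute)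
  then have "uniform_limit {0..T} (\<lambda>n t. \<Sum>k<n. P (Suc k) t - P k t)
      (\<lambda>t. \<Sum>k. P (Suc k) t - P k t) sequentially"
    by (intro Weierstrass_m_test[OF M] summable_mult)
  then have lim: "uniform_limit {0..T} (\<lambda>n t. x + (\<Sum>k<n. P (Suc k) t - P k t))
      (\<lambda>t. x + (\<Sum>k. P (Suc k) t - P k t)) sequentially"
    by (intro uniform_limit_add uniform_limit_const)
  have telescope: "P n t = x + (\<Sum>k<n. P (Suc k) t - P k t)" for n t
    by (induction n) (auto simp: algebra_simps)
  have P_lim: "uniform_limit {0..T} P (\<lambda>t. x + (\<Sum>k. P (Suc k) t - P k t)) sequentially"
    using lim by (subst uniform_limit_cong'[OF telescope refl])
  have "S t = x + (\<Sum>k. P (Suc k) t - P k t)" if "t \<in> {0..T}" for t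
    unfolding picard_limit_def using tendsto_uniform_limitI[OF P_lim that] by (rule limI)
  then show ?thesis using P_lim by (subst uniform_limit_cong'[OF refl]) auto
qed

lemma picard_iter_tendsto: "0 \<le> t \<Longrightarrow> (\<lambda>k. P k t) \<longlonglongrightarrow> S t"
  using tendsto_uniform_limitI[OF uniform_limit_picard_iter[of t]] by auto

lemma continuous_on_picard_limit: "continuous_on {0..T} S"
  by (rule uniform_limit_theorem[OF _ uniform_limit_picard_iter])
    (auto intro!: always_eventually continuous_on_picard_iter)

lemma picard_limit_fixed_point:
  assumes t: "0 \<le> t"
  shows "S t = \<Gamma> S t"
proof -
  obtain G where G0: "0 \<le> G" and G: "\<forall>s\<in>{0..t}. 0 \<le> g s \<and> g s \<le> G"
    using g_bounded by blast
  define K where "K = 2 * G * L * t"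
  have K: "0 \<le> K"
    unfolding K_def using G0 t lipschitz_on_nonneg[OF F_lipschitz] by simp
  have "(\<lambda>k. P (Suc k) t) \<longlonglongrightarrow> \<Gamma> S t"
  proof (rule LIMSEQ_I)
    fix e :: real assume e: "0 < e"
    then have e': "0 < e / (K + 1)" using K by simp
    obtain N where N: "\<And>k s. N \<le> k \<Longrightarrow> s \<in> {0..t} \<Longrightarrow> dist (P k s) (S s) < e / (K + 1)"
      using uniform_limitD[OF uniform_limit_picard_iter e'] unfolding eventually_sequentially by blast
    have "norm (P (Suc k) t - \<Gamma> S t) < e" if k: "N \<le> k" for k
    proof -
      have "norm (\<Gamma> (P k) t - \<Gamma> S t) \<le> e / (K + 1) * (2 * G * L * t) ^ Suc 0 / fact (Suc 0)"
        using N[OF k] G t e' continuous_on_subset[OF g_cont]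
        by (intro norm_picard_map_diff_le[OF r_pos _ _ _ F_lipschitz continuous_on_picard_iter
              continuous_on_picard_limit]) (auto simp: dist_norm less_imp_le)
      also have "\<dots> = e * (K / (K + 1))" unfolding K_def by simp
      also have "\<dots> < e" using e K by (simp add: divide_less_eq)
      finally show ?thesis by simp
    qed
    then show "\<exists>N. \<forall>k\<ge>N. norm (P (Suc k) t - \<Gamma> S t) < e" by blast
  qed
  moreover have "(\<lambda>k. P (Suc k) t) \<longlonglongrightarrow> S t"
    using LIMSEQ_Suc[OF picard_iter_tendsto[OF t]] .
  ultimately show ?thesis by (rule LIMSEQ_unique[rotated])
qed

lemma picard_fixed_point_unique:
  assumes X: "continuous_on {0..T} X" and Y: "continuous_on {0..T} Y"
    and X_fix: "\<And>t. t \<in> {0..T} \<Longrightarrow> X t = \<Gamma> X t"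
    and Y_fix: "\<And>t. t \<in> {0..T} \<Longrightarrow> Y t = \<Gamma> Y t"
    and t: "t \<in> {0..T}"
  shows "X t = Y t"
proof -
  obtain G where G: "\<forall>s\<in>{0..T}. 0 \<le> g s \<and> g s \<le> G" using g_bounded by blast
  obtain C where C: "C \<ge> 0" "\<And>s. s \<in> {0..T} \<Longrightarrow> norm (X s - Y s) \<le> C"
    using continuous_on_compact_bound[OF compact_Icc continuous_on_diff[OF X Y]] by blast
  have "norm (X t - Y t) \<le> C * ((2 * G * L * t) ^ k / fact k)" for k
    using norm_iterates_diff_le[where U = "\<lambda>_. X" and V = "\<lambda>_. Y", OF G X Y X_fix Y_fix C t]
    by simp
  moreover have "(\<lambda>k. C * ((2 * G * L * t) ^ k / fact k)) \<longlonglongrightarrow> C * 0"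
    using summable_LIMSEQ_zero[OF summable_exp_generic[of "2 * G * L * t"]]
    by (intro tendsto_mult tendsto_const) (simp add: divide_inverse mult.commute)
  ultimately have "norm (X t - Y t) \<le> 0"
    by (intro tendsto_lowerbound[OF _ always_eventually]) auto
  then show ?thesis by simp
qed

end

section \<open>Truncation and the a priori bound\<close>

lemma continuous_on_atLeast_of_Icc:
  fixes f :: "real \<Rightarrow> 'b::topological_space"
  assumes "\<And>T. 0 \<le> T \<Longrightarrow> continuous_on {0..T} f"
  shows "continuous_on {0..} f"
  unfolding continuous_on_eq_continuous_within
proof
  fix t :: real assume "t \<in> {0..}"
  then have "continuous (at t within {0..t + 1}) f"
    using assms[of "t + 1"] unfolding continuous_on_eq_continuous_within by auto
  moreover have "at t within {0..} = at t within {0..t + 1}"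
    by (rule at_within_nhd[where S = "{..<t + 1}"]) auto
  ultimately show "continuous (at t within {0..}) f" by simp
qed

lemma norm_less_of_inner_derivative_neg:
  fixes Y Y' :: "real \<Rightarrow> 'a::real_inner"
  assumes ab: "a < b"
    and deriv: "\<And>\<tau>. \<tau> \<in> {a..b} \<Longrightarrow> (Y has_vector_derivative Y' \<tau>) (at \<tau> within {a..b})"
    and inward: "\<And>\<tau>. \<tau> \<in> {a<..<b} \<Longrightarrow> Y \<tau> \<bullet> Y' \<tau> < 0"
  shows "norm (Y b) < norm (Y a)"
proof -
  have "((\<lambda>\<tau>. Y \<tau> \<bullet> Y \<tau>) has_derivative (\<lambda>h. Y \<tau> \<bullet> (h *\<^sub>R Y' \<tau>) + (h *\<^sub>R Y' \<tau>) \<bullet> Y \<tau>))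
      (at \<tau> within {a..b})" if "a \<le> \<tau>" "\<tau> \<le> b" for \<tau>
  proof -
    have "(Y has_derivative (\<lambda>h. h *\<^sub>R Y' \<tau>)) (at \<tau> within {a..b})"
      using deriv[of \<tau>] that by (simp add: has_vector_derivative_def)
    from has_derivative_inner[OF this this] show ?thesis .
  qed
  from mvt_simple[OF ab this] obtain \<xi> where \<xi>: "\<xi> \<in> {a<..<b}"
    and "Y b \<bullet> Y b - Y a \<bullet> Y a = Y \<xi> \<bullet> ((b - a) *\<^sub>R Y' \<xi>) + ((b - a) *\<^sub>R Y' \<xi>) \<bullet> Y \<xi>"
    by blast
  then have "Y b \<bullet> Y b - Y a \<bullet> Y a = 2 * (b - a) * (Y \<xi> \<bullet> Y' \<xi>)" by (simp add: inner_commute)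
  also have "\<dots> < 0" using inward[OF \<xi>] ab by (simp add: mult_pos_neg)
  finally have "(norm (Y b))\<^sup>2 < (norm (Y a))\<^sup>2" by (simp add: power2_norm_eq_inner)
  then show ?thesis by (rule power2_less_imp_less) simp
qed

text \<open>Just after the last time \<open>s\<close> before an exit at which the path is in the ball, it lies
  in the shell, where its norm decreases.\<close>

lemma norm_le_of_inward_derivative:
  fixes Y Y' :: "real \<Rightarrow> 'a::real_inner"
  assumes deriv: "\<And>\<tau>. \<tau> \<in> {0..T} \<Longrightarrow> (Y has_vector_derivative Y' \<tau>) (at \<tau> within {0..T})"
    and start: "norm (Y 0) \<le> K" and e: "0 < e"
    and inward: "\<And>\<tau>. \<tau> \<in> {0..T} \<Longrightarrow> K < norm (Y \<tau>) \<Longrightarrow> norm (Y \<tau>) < K + e \<Longrightarrow> Y \<tau> \<bullet> Y' \<tau> < 0"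
    and t: "t \<in> {0..T}"
  shows "norm (Y t) \<le> K"
proof (rule ccontr)
  assume exit: "\<not> norm (Y t) \<le> K"
  have Yc: "continuous_on {0..T} Y"
    using deriv has_vector_derivative_continuous continuous_on_eq_continuous_within by blast
  define A where "A = {0..t} \<inter> (\<lambda>\<tau>. norm (Y \<tau>)) -` {..K}"
  have A_bdd: "bdd_above A" unfolding A_def by (rule bdd_aboveI[of _ t]) auto
  have "closed A" unfolding A_def using t
    by (intro continuous_closed_preimage continuous_on_norm continuous_on_subset[OF Yc]) auto
  moreover have "0 \<in> A" unfolding A_def using start t by auto
  ultimately have "Sup A \<in> A" using A_bdd by (intro closed_contains_Sup) auto
  define s where "s = Sup A"
  have s: "0 \<le> s" "s < t" "norm (Y s) \<le> K"
    using \<open>Sup A \<in> A\<close> exit unfolding A_def s_def by (auto simp: order.order_iff_strict)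
  have outside: "K < norm (Y u)" if "s < u" "u \<le> t" for u
  proof (rule ccontr)
    assume "\<not> K < norm (Y u)"
    then have "u \<in> A" unfolding A_def using that s by auto
    then show False using cSup_upper[OF _ A_bdd] that unfolding s_def by fastforce
  qed
  obtain \<delta> where \<delta>: "\<delta> > 0" "\<And>u. u \<in> {0..T} \<Longrightarrow> dist u s < \<delta> \<Longrightarrow> dist (Y u) (Y s) < e"
  proof -
    have "s \<in> {0..T}" using s t by auto
    then show ?thesis using Yc e that unfolding continuous_on_iff by blast
  qed
  define u where "u = min (s + \<delta> / 2) t"
  have u: "s < u" "u \<le> t" using s \<delta>(1) unfolding u_def by auto
  have "norm (Y u) < norm (Y s)"
  proof (rule norm_less_of_inner_derivative_neg[OF u(1)])
    fix \<tau> assume "\<tau> \<in> {s..u}"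
    then show "(Y has_vector_derivative Y' \<tau>) (at \<tau> within {s..u})"
      using deriv[of \<tau>] s u t by (auto intro: has_vector_derivative_within_subset)
  next
    fix \<tau> assume \<tau>: "\<tau> \<in> {s<..<u}"
    have "dist (Y \<tau>) (Y s) < e" using \<tau> s u t \<delta> unfolding u_def dist_real_def by auto
    then have "norm (Y \<tau>) < K + e"
      using s norm_triangle_ineq2[of "Y \<tau>" "Y s"] unfolding dist_norm by linarith
    then show "Y \<tau> \<bullet> Y' \<tau> < 0" using inward outside \<tau> s u t by auto
  qed
  then show False using outside[OF u] s by simp
qed

lemma inner_scaled_shift_ge:
  fixes y z :: "'a::real_inner"
  assumes r: "0 < r" and t: "0 \<le> t" and z: "norm z \<le> Bz"
  shows "- (norm y * Bz / r) \<le> y \<bullet> ((1 / (r + t)) *\<^sub>R (y + z))"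
proof -
  have "\<bar>y \<bullet> z\<bar> \<le> norm y * norm z" by (rule Cauchy_Schwarz_ineq2)
  also have "\<dots> \<le> norm y * Bz" using z by (rule mult_left_mono) simp
  finally have "- (norm y * Bz) \<le> y \<bullet> (y + z)"
    using inner_ge_zero[of y] unfolding inner_add_right by linarith
  then have "- (norm y * Bz) / (r + t) \<le> y \<bullet> (y + z) / (r + t)"
    using r t by (intro divide_right_mono) auto
  then have "- (norm y * Bz) / (r + t) \<le> y \<bullet> ((1 / (r + t)) *\<^sub>R (y + z))" by simp
  moreover have "norm y * Bz / (r + t) \<le> norm y * Bz / r"
    using r t order_trans[OF norm_ge_zero z] by (intro divide_left_mono) auto
  ultimately show ?thesis by linarith
qed

definition truncation :: "real \<Rightarrow> ('a::euclidean_space \<Rightarrow> 'b) \<Rightarrow> 'a \<Rightarrow> 'b" where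
  "truncation R F z = F (closest_point (cball 0 R) z)"

lemma truncation_eq: "norm z \<le> R \<Longrightarrow> truncation R F z = F z"
  unfolding truncation_def by (subst closest_point_self) auto

lemma lipschitz_on_truncation:
  assumes F: "L-lipschitz_on (cball 0 R) F" and R: "0 \<le> R"
  shows "L-lipschitz_on UNIV (truncation R F)"
proof -
  have ne: "cball (0::'a) R \<noteq> {}" using R by simp
  have "1-lipschitz_on UNIV (closest_point (cball (0::'a) R))"
    using closest_point_lipschitz[OF convex_cball closed_cball ne] by (intro lipschitz_onI) auto
  moreover have "L-lipschitz_on (range (closest_point (cball 0 R))) F"
    by (intro lipschitz_on_subset[OF F]) (auto intro: closest_point_in_set[OF closed_cball ne])
  ultimately show ?thesis
    unfolding truncation_def using lipschitz_on_compose2 by fastforce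
qed

lemma picard_map_truncation_eq:
  assumes "\<And>s. s \<in> {0..t} \<Longrightarrow> norm (X s - running_mean r m X s) \<le> R"
  shows "picard_map g (truncation R F) x m r b X t = picard_map g F x m r b X t"
  using assms by (intro picard_map_cong_drift) (simp add: truncation_eq)

definition pathwise_solution :: "(real \<Rightarrow> real) \<Rightarrow> ('a::euclidean_space \<Rightarrow> 'a) \<Rightarrow> 'a \<Rightarrow> 'a
    \<Rightarrow> real \<Rightarrow> (real \<Rightarrow> 'a) \<Rightarrow> real \<Rightarrow> 'a" where
  "pathwise_solution g F x m r b t = lim (\<lambda>n::nat. picard_limit g (truncation (real n) F) x m r b t)"

locale mean_field_drift =
  fixes F :: "'a::euclidean_space \<Rightarrow> 'a" and c C :: real
    and g :: "real \<Rightarrow> real" and g0 r :: real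
  assumes F_lipschitz_on_cball: "\<And>R. \<exists>L. L-lipschitz_on (cball 0 R) F"
    and F_coercive: "\<And>u v. c * (norm (u - v))\<^sup>2 - C * norm (u - v) \<le> (F u - F v) \<bullet> (u - v)"
    and c_pos: "0 < c" and C_nonneg: "0 \<le> C"
    and r_pos: "0 < r" and g_cont: "continuous_on {0..} g"
    and g0_pos: "0 < g0" and g_ge_g0: "\<And>t. 0 \<le> t \<Longrightarrow> g0 \<le> g t"
begin

lemma F_cont: "continuous_on UNIV F"
proof (rule continuous_at_imp_continuous_on, rule ballI)
  fix y :: 'a
  obtain L where "L-lipschitz_on (cball 0 (norm y + 1)) F" using F_lipschitz_on_cball by blast
  then show "isCont F y"
    by (rule continuous_on_interior[OF lipschitz_on_continuous_on]) simp
qed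

lemma picard_truncation:
  assumes "L-lipschitz_on (cball 0 R) F" "0 \<le> R" "continuous_on {0..} b"
  shows "picard g (truncation R F) r L b"
  using assms r_pos g_cont g0_pos g_ge_g0
  by (intro picard.intro lipschitz_on_truncation) (auto intro: order_trans[OF less_imp_le])

lemma continuous_on_truncated_picard_limit:
  assumes "continuous_on {0..} b" "0 \<le> R"
  shows "continuous_on {0..T} (picard_limit g (truncation R F) x m r b)"
  using F_lipschitz_on_cball picard_truncation[OF _ assms(2,1)] picard.continuous_on_picard_limit
  by blast

lemma inner_F_shift_ge:
  assumes "norm (F z) \<le> A"
  shows "c * (norm y)\<^sup>2 - (C + A) * norm y \<le> y \<bullet> F (y + z)"
proof -
  have "c * (norm y)\<^sup>2 - C * norm y \<le> (F (y + z) - F z) \<bullet> y" using F_coercive[of "y + z" z] by simp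
  moreover have "\<bar>F z \<bullet> y\<bar> \<le> norm (F z) * norm y" by (rule Cauchy_Schwarz_ineq2)
  moreover have "norm (F z) * norm y \<le> A * norm y" using assms by (rule mult_right_mono) simp
  ultimately show ?thesis by (simp add: inner_diff_left inner_commute algebra_simps)
qed

lemma inner_drift_neg:
  assumes t: "0 \<le> t" and \<gamma>: "g0 \<le> \<gamma>" "\<gamma> \<le> G" and Fz: "norm (F z) \<le> A" and z: "norm z \<le> Bz"
    and K: "(G * (C + A) + Bz / r) / (g0 * c) \<le> K" and y: "K < norm y"
  shows "y \<bullet> (- (\<gamma> *\<^sub>R F (y + z)) - (1 / (r + t)) *\<^sub>R (y + z)) < 0"
proof -
  let ?n = "norm y"
  have A: "0 \<le> A" and Bz: "0 \<le> Bz" using Fz z norm_ge_zero order_trans by blast+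
  have "0 \<le> (G * (C + A) + Bz / r) / (g0 * c)"
    using \<gamma> g0_pos c_pos C_nonneg A Bz r_pos by simp
  then have n: "0 < ?n" using K y by linarith
  have F_inner: "c * ?n\<^sup>2 - (C + A) * ?n \<le> y \<bullet> F (y + z)" by (rule inner_F_shift_ge[OF Fz])
  have mean_inner: "- (?n * Bz / r) \<le> y \<bullet> ((1 / (r + t)) *\<^sub>R (y + z))"
    by (rule inner_scaled_shift_ge[OF r_pos t z])
  have "y \<bullet> (- (\<gamma> *\<^sub>R F (y + z)) - (1 / (r + t)) *\<^sub>R (y + z))
      = - (\<gamma> * (y \<bullet> F (y + z))) - y \<bullet> ((1 / (r + t)) *\<^sub>R (y + z))"
    by (simp add: inner_diff_right)
  also have "\<dots> \<le> - (\<gamma> * (c * ?n\<^sup>2 - (C + A) * ?n)) + ?n * Bz / r"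
    using mean_inner mult_left_mono[OF F_inner, of \<gamma>] \<gamma> g0_pos by linarith
  also have "\<dots> = ?n * (\<gamma> * (C + A) + Bz / r - \<gamma> * c * ?n)"
    by (simp add: algebra_simps power2_eq_square)
  also have "\<dots> < 0"
  proof -
    have "G * (C + A) + Bz / r \<le> g0 * c * K"
      using K g0_pos c_pos by (simp add: pos_divide_le_eq mult.commute)
    also have "\<dots> < g0 * c * ?n" using y g0_pos c_pos by simp
    also have "\<dots> \<le> \<gamma> * c * ?n" using \<gamma> c_pos n by (intro mult_right_mono) auto
    finally have "\<gamma> * (C + A) + Bz / r < \<gamma> * c * ?n"
      using \<gamma> C_nonneg A mult_right_mono[of \<gamma> G "C + A"] by linarith
    then show ?thesis using n by (simp add: mult_pos_neg)
  qed
  finally show ?thesis .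
qed

text \<open>With \<open>\<mu>\<close> the running mean, \<open>Y = X - \<mu> - b\<close> satisfies \<open>Y' = -g F(Y + b) - (Y + b)/(r+t)\<close>
  where the truncation is inactive, and coercivity of \<open>F\<close> makes \<open>Y'\<close> point inwards outside a ball
  whose radius does not depend on \<open>R\<close>.\<close>

lemma truncated_solution_deviation_bound:
  assumes b: "continuous_on {0..} b" and T: "0 \<le> T"
  obtains K where "0 < K"
    and "\<And>R X t. K \<le> R \<Longrightarrow> continuous_on {0..T} X \<Longrightarrow>
           (\<And>t. t \<in> {0..T} \<Longrightarrow> X t = picard_map g (truncation R F) x m r b X t) \<Longrightarrow>
           t \<in> {0..T} \<Longrightarrow> norm (X t - running_mean r m X t) < K"
proof -
  have bT: "continuous_on {0..T} b" using b by (rule continuous_on_subset) auto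
  have gT: "continuous_on {0..T} g" using g_cont by (rule continuous_on_subset) auto
  obtain G where G: "\<And>s. s \<in> {0..T} \<Longrightarrow> norm (g s) \<le> G"
    using continuous_on_compact_bound[OF compact_Icc gT] by blast
  obtain Bz where Bz: "0 \<le> Bz" "\<And>s. s \<in> {0..T} \<Longrightarrow> norm (b s) \<le> Bz"
    using continuous_on_compact_bound[OF compact_Icc bT] by blast
  obtain A where A: "\<And>s. s \<in> {0..T} \<Longrightarrow> norm (F (b s)) \<le> A"
    using continuous_on_compact_bound[OF compact_Icc continuous_on_compose2[OF F_cont bT]] by blast
  define K where "K = max (norm (x - m)) ((G * (C + A) + Bz / r) / (g0 * c))"
  have K: "0 \<le> K" unfolding K_def by (rule order_trans[OF norm_ge_zero max.cobounded1])
  show ?thesis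
  proof (rule that)
    show "0 < K + Bz + 1" using K Bz by simp
    fix R X t assume R: "K + Bz + 1 \<le> R" and X: "continuous_on {0..T} X"
      and X_fix: "\<And>t. t \<in> {0..T} \<Longrightarrow> X t = picard_map g (truncation R F) x m r b X t"
      and t: "t \<in> {0..T}"
    define Y where "Y \<tau> = X \<tau> - running_mean r m X \<tau> - b \<tau>" for \<tau>
    define Y' where "Y' \<tau> = - (g \<tau> *\<^sub>R truncation R F (X \<tau> - running_mean r m X \<tau>))
      - (1 / (r + \<tau>)) *\<^sub>R (X \<tau> - running_mean r m X \<tau>)" for \<tau>
    have dev: "X \<tau> - running_mean r m X \<tau> = Y \<tau> + b \<tau>" for \<tau> unfolding Y_def by simp
    obtain L where L: "L-lipschitz_on (cball 0 R) F" using F_lipschitz_on_cball by blast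
    have "0 \<le> R" using R K Bz by linarith
    then have "continuous_on UNIV (truncation R F)"
      by (rule lipschitz_on_continuous_on[OF lipschitz_on_truncation[OF L]])
    then have deriv: "(Y has_vector_derivative Y' \<tau>) (at \<tau> within {0..T})" if "\<tau> \<in> {0..T}" for \<tau>
      unfolding Y_def[abs_def] Y'_def
      by (rule fixed_point_deviation_has_vector_derivative[OF X r_pos gT _ X_fix that])
    have start: "norm (Y 0) \<le> K"
      using X_fix[of 0] T r_pos unfolding Y_def running_mean_def picard_map_def K_def by simp
    have inward: "Y \<tau> \<bullet> Y' \<tau> < 0"
      if \<tau>: "\<tau> \<in> {0..T}" and out: "K < norm (Y \<tau>)" and near: "norm (Y \<tau>) < K + 1" for \<tau>
    proof -
      have "norm (Y \<tau> + b \<tau>) \<le> R"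
        using norm_triangle_ineq[of "Y \<tau>" "b \<tau>"] near Bz(2)[OF \<tau>] R by linarith
      then have inactive: "truncation R F (Y \<tau> + b \<tau>) = F (Y \<tau> + b \<tau>)" by (rule truncation_eq)
      have "(G * (C + A) + Bz / r) / (g0 * c) \<le> K" unfolding K_def by simp
      then show ?thesis
        unfolding Y'_def dev inactive using \<tau> G[OF \<tau>] A[OF \<tau>] Bz(2)[OF \<tau>] out g_ge_g0[of \<tau>]
        by (intro inner_drift_neg[of \<tau> "g \<tau>" G "b \<tau>" A Bz K "Y \<tau>"]) auto
    qed
    have "norm (Y t) \<le> K" by (rule norm_le_of_inward_derivative[OF deriv start zero_less_one inward t])
    then show "norm (X t - running_mean r m X t) < K + Bz + 1"
      using dev[of t] norm_triangle_ineq[of "Y t" "b t"] Bz(2)[OF t] by simp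
  qed
qed

lemma fixed_point_unique:
  assumes b: "continuous_on {0..} b"
    and X: "continuous_on {0..T} X" and Y: "continuous_on {0..T} Y"
    and X_fix: "\<And>t. t \<in> {0..T} \<Longrightarrow> X t = picard_map g F x m r b X t"
    and Y_fix: "\<And>t. t \<in> {0..T} \<Longrightarrow> Y t = picard_map g F x m r b Y t"
    and t: "t \<in> {0..T}"
  shows "X t = Y t"
proof -
  obtain RX where RX: "0 \<le> RX" "\<And>s. s \<in> {0..T} \<Longrightarrow> norm (X s - running_mean r m X s) \<le> RX"
    using continuous_on_compact_bound[OF compact_Icc continuous_on_diff[OF X
          continuous_on_running_mean[OF X r_pos]]] by blast
  obtain RY where RY: "\<And>s. s \<in> {0..T} \<Longrightarrow> norm (Y s - running_mean r m Y s) \<le> RY"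
    using continuous_on_compact_bound[OF compact_Icc continuous_on_diff[OF Y
          continuous_on_running_mean[OF Y r_pos]]] by blast
  define R where "R = max RX RY"
  obtain L where "L-lipschitz_on (cball 0 R) F" using F_lipschitz_on_cball by blast
  then have "picard g (truncation R F) r L b"
    using RX(1) b unfolding R_def by (intro picard_truncation) auto
  then interpret picard g "truncation R F" x m r L b .
  show ?thesis
  proof (rule picard_fixed_point_unique[OF X Y _ _ t])
    fix s assume s: "s \<in> {0..T}"
    show "X s = picard_map g (truncation R F) x m r b X s"
      using s X_fix[OF s] RX(2) by (subst picard_map_truncation_eq) (auto simp: R_def le_max_iff_disj)
    show "Y s = picard_map g (truncation R F) x m r b Y s"
      using s Y_fix[OF s] RY by (subst picard_map_truncation_eq) (auto simp: R_def le_max_iff_disj)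
  qed
qed

lemma truncated_picard_limit_fixed_point:
  assumes b: "continuous_on {0..} b" and T: "0 \<le> T"
  obtains K where "\<And>R t. K \<le> R \<Longrightarrow> t \<in> {0..T} \<Longrightarrow>
    picard_limit g (truncation R F) x m r b t
      = picard_map g F x m r b (picard_limit g (truncation R F) x m r b) t"
proof -
  obtain K where K: "0 < K"
    and bound: "\<And>R X t. K \<le> R \<Longrightarrow> continuous_on {0..T} X \<Longrightarrow>
           (\<And>t. t \<in> {0..T} \<Longrightarrow> X t = picard_map g (truncation R F) x m r b X t) \<Longrightarrow>
           t \<in> {0..T} \<Longrightarrow> norm (X t - running_mean r m X t) < K"
    using truncated_solution_deviation_bound[OF b T] by blast
  show ?thesis
  proof (rule that)
    fix R t assume R: "K \<le> R" and t: "t \<in> {0..T}"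
    obtain L where "L-lipschitz_on (cball 0 R) F" using F_lipschitz_on_cball by blast
    then have "picard g (truncation R F) r L b" using R K b by (intro picard_truncation) auto
    then interpret picard g "truncation R F" x m r L b .
    have "norm (S s - running_mean r m S s) \<le> R" if "s \<in> {0..t}" for s
      using bound[OF R continuous_on_picard_limit picard_limit_fixed_point, of s] that t R by fastforce
    then have "\<Gamma> S t = picard_map g F x m r b S t" by (rule picard_map_truncation_eq)
    then show "S t = picard_map g F x m r b S t" using picard_limit_fixed_point[of t] t by simp
  qed
qed

lemma pathwise_solution_eq_truncated:
  assumes b: "continuous_on {0..} b" and T: "0 \<le> T"
  obtains N :: nat where
    "\<And>n t. N \<le> n \<Longrightarrow> t \<in> {0..T} \<Longrightarrow>
       picard_limit g (truncation (real n) F) x m r b t = pathwise_solution g F x m r b t"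
    "\<And>t. t \<in> {0..T} \<Longrightarrow> picard_limit g (truncation (real N) F) x m r b t
       = picard_map g F x m r b (picard_limit g (truncation (real N) F) x m r b) t"
proof -
  let ?S = "\<lambda>n::nat. picard_limit g (truncation (real n) F) x m r b"
  obtain K where K: "\<And>R t. K \<le> R \<Longrightarrow> t \<in> {0..T} \<Longrightarrow>
      picard_limit g (truncation R F) x m r b t
        = picard_map g F x m r b (picard_limit g (truncation R F) x m r b) t"
    using truncated_picard_limit_fixed_point[OF b T] by blast
  define N where "N = nat \<lceil>K\<rceil>"
  have fixed: "?S n t = picard_map g F x m r b (?S n) t" if "N \<le> n" "t \<in> {0..T}" for n t
  proof (rule K[OF _ that(2)])
    have "K \<le> real N" unfolding N_def by (rule real_nat_ceiling_ge)
    then show "K \<le> real n" using that(1) by linarith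
  qed
  have same: "?S n t = ?S N t" if "N \<le> n" "t \<in> {0..T}" for n t
    using fixed that continuous_on_truncated_picard_limit[OF b]
    by (intro fixed_point_unique[OF b _ _ _ _ that(2)]) auto
  have sol: "pathwise_solution g F x m r b t = ?S N t" if t: "t \<in> {0..T}" for t
  proof -
    have "(\<lambda>n. ?S n t) \<longlonglongrightarrow> ?S N t"
      by (rule tendsto_eventually, rule eventually_sequentiallyI[of N]) (rule same[OF _ t])
    then show ?thesis unfolding pathwise_solution_def by (rule limI)
  qed
  show ?thesis
  proof (rule that)
    fix n t assume n: "N \<le> n" and t: "t \<in> {0..T}"
    show "?S n t = pathwise_solution g F x m r b t" using same[OF n t] sol[OF t] by (rule trans_sym)
  next
    fix t assume "t \<in> {0..T}"
    then show "?S N t = picard_map g F x m r b (?S N) t" by (rule fixed[OF order_refl])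
  qed
qed

lemma continuous_on_pathwise_solution:
  assumes b: "continuous_on {0..} b"
  shows "continuous_on {0..} (pathwise_solution g F x m r b)"
proof (rule continuous_on_atLeast_of_Icc)
  fix T :: real assume "0 \<le> T"
  then obtain N :: nat where N: "\<And>t. t \<in> {0..T} \<Longrightarrow>
      picard_limit g (truncation (real N) F) x m r b t = pathwise_solution g F x m r b t"
    using pathwise_solution_eq_truncated[OF b] by (metis order_refl)
  show "continuous_on {0..T} (pathwise_solution g F x m r b)"
    using continuous_on_truncated_picard_limit[OF b] N by (rule continuous_on_eq) auto
qed

lemma pathwise_solution_fixed_point:
  assumes b: "continuous_on {0..} b" and t: "0 \<le> t"
  shows "pathwise_solution g F x m r b t = picard_map g F x m r b (pathwise_solution g F x m r b) t"
proof -
  obtain N :: nat where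
    N: "\<And>s. s \<in> {0..t} \<Longrightarrow>
      picard_limit g (truncation (real N) F) x m r b s = pathwise_solution g F x m r b s"
    and fixed: "\<And>s. s \<in> {0..t} \<Longrightarrow> picard_limit g (truncation (real N) F) x m r b s
       = picard_map g F x m r b (picard_limit g (truncation (real N) F) x m r b) s"
    using pathwise_solution_eq_truncated[OF b t] by (metis order_refl)
  have "pathwise_solution g F x m r b t
      = picard_map g F x m r b (picard_limit g (truncation (real N) F) x m r b) t"
    using N[of t] fixed[of t] t by simp
  also have "\<dots> = picard_map g F x m r b (pathwise_solution g F x m r b) t"
    by (rule picard_map_cong) (rule N)
  finally show ?thesis .
qed

lemma pathwise_solution_unique:
  assumes b: "continuous_on {0..} b" and Y: "continuous_on {0..T} Y"
    and Y_fix: "\<And>t. t \<in> {0..T} \<Longrightarrow> Y t = picard_map g F x m r b Y t"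
    and t: "t \<in> {0..T}"
  shows "Y t = pathwise_solution g F x m r b t"
  using continuous_on_subset[OF continuous_on_pathwise_solution[OF b]] pathwise_solution_fixed_point[OF b]
  by (intro fixed_point_unique[OF b Y _ Y_fix _ t]) auto

lemma truncated_picard_limit_tendsto:
  assumes b: "continuous_on {0..} b" and t: "0 \<le> t"
  shows "(\<lambda>n. picard_limit g (truncation (real n) F) x m r b t) \<longlonglongrightarrow> pathwise_solution g F x m r b t"
proof -
  obtain N :: nat where "\<And>n. N \<le> n \<Longrightarrow>
      picard_limit g (truncation (real n) F) x m r b t = pathwise_solution g F x m r b t"
    using pathwise_solution_eq_truncated[OF b t] t by (metis atLeastAtMost_iff order_refl)
  then show ?thesis by (intro tendsto_eventually eventually_sequentiallyI)
qed

end

section \<open>Adaptedness\<close>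

lemma ceiling_grid_tendsto: "(\<lambda>n. real_of_int \<lceil>real (Suc n) * s\<rceil> / real (Suc n)) \<longlonglongrightarrow> s"
proof (rule tendsto_sandwich[of "\<lambda>n. s" _ _ "\<lambda>n. s + 1 / real (Suc n)"])
  show "\<forall>\<^sub>F n in sequentially. s \<le> real_of_int \<lceil>real (Suc n) * s\<rceil> / real (Suc n)"
    by (intro always_eventually allI) (simp add: pos_le_divide_eq mult.commute)
  show "\<forall>\<^sub>F n in sequentially. real_of_int \<lceil>real (Suc n) * s\<rceil> / real (Suc n) \<le> s + 1 / real (Suc n)"
  proof (intro always_eventually allI)
    fix n
    have "real_of_int \<lceil>real (Suc n) * s\<rceil> \<le> real (Suc n) * s + 1" by linarith
    then show "real_of_int \<lceil>real (Suc n) * s\<rceil> / real (Suc n) \<le> s + 1 / real (Suc n)"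
      by (simp add: pos_divide_le_eq field_simps del: of_nat_Suc)
  qed
  show "(\<lambda>n. s + 1 / real (Suc n)) \<longlonglongrightarrow> s"
    using tendsto_add[OF tendsto_const LIMSEQ_Suc[OF lim_1_over_n], of s] by simp
qed simp

text \<open>Evaluating the clamped path on the grid \<open>\<lceil>(n+1)s\<rceil>/(n+1)\<close> gives countably-valued, hence
  jointly measurable, approximations that converge by continuity in time.\<close>

lemma borel_measurable_clamped_param:
  fixes f :: "real \<Rightarrow> 'w \<Rightarrow> 'a::euclidean_space"
  assumes t: "0 \<le> t"
    and meas: "\<And>s. s \<in> {0..t} \<Longrightarrow> f s \<in> borel_measurable N"
    and cont: "\<And>\<omega>. \<omega> \<in> space N \<Longrightarrow> continuous_on {0..t} (\<lambda>s. f s \<omega>)"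
  shows "(\<lambda>p. f (max 0 (min t (snd p))) (fst p)) \<in> borel_measurable (N \<Otimes>\<^sub>M lborel)"
proof -
  define cl where "cl s = max 0 (min t s)" for s :: real
  have cl: "cl s \<in> {0..t}" for s unfolding cl_def using t by auto
  define q where "q n s = real_of_int \<lceil>real (Suc n) * s\<rceil> / real (Suc n)" for n :: nat and s :: real
  have approx_meas: "(\<lambda>p. f (cl (q n (snd p))) (fst p)) \<in> borel_measurable (N \<Otimes>\<^sub>M lborel)" for n
  proof -
    have "(\<lambda>p. f (cl (real_of_int i / real (Suc n))) (fst p)) \<in> borel_measurable (N \<Otimes>\<^sub>M lborel)"
      for i :: int
      by (rule measurable_compose[OF measurable_fst meas[OF cl]])
    moreover have "(\<lambda>p::'w \<times> real. \<lceil>real (Suc n) * snd p\<rceil>) \<in> measurable (N \<Otimes>\<^sub>M lborel) (count_space UNIV)"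
      by measurable
    ultimately show ?thesis unfolding q_def
      by (rule measurable_compose_countable[where f = "\<lambda>i p. f (cl (real_of_int i / real (Suc n))) (fst p)"])
  qed
  have q_lim: "(\<lambda>n. q n s) \<longlonglongrightarrow> s" for s unfolding q_def by (rule ceiling_grid_tendsto)
  have "(\<lambda>p. f (cl (snd p)) (fst p)) \<in> borel_measurable (N \<Otimes>\<^sub>M lborel)"
  proof (rule borel_measurable_LIMSEQ_metric[OF approx_meas])
    fix p :: "'w \<times> real" assume "p \<in> space (N \<Otimes>\<^sub>M lborel)"
    then have \<omega>: "fst p \<in> space N" by (auto simp: space_pair_measure)
    have "continuous_on UNIV cl" unfolding cl_def by (intro continuous_intros)
    then have "(\<lambda>n. cl (q n (snd p))) \<longlonglongrightarrow> cl (snd p)"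
      by (rule continuous_on_tendsto_compose[OF _ q_lim]) auto
    then show "(\<lambda>n. f (cl (q n (snd p))) (fst p)) \<longlonglongrightarrow> f (cl (snd p)) (fst p)"
      by (rule continuous_on_tendsto_compose[OF cont[OF \<omega>] _ cl]) (intro always_eventually allI cl)
  qed
  then show ?thesis unfolding cl_def .
qed

lemma borel_measurable_integral_Icc_param:
  fixes f :: "real \<Rightarrow> 'w \<Rightarrow> 'a::euclidean_space"
  assumes meas: "\<And>s. s \<in> {0..t} \<Longrightarrow> f s \<in> borel_measurable N"
    and cont: "\<And>\<omega>. \<omega> \<in> space N \<Longrightarrow> continuous_on {0..t} (\<lambda>s. f s \<omega>)"
  shows "(\<lambda>\<omega>. integral {0..t} (\<lambda>s. f s \<omega>)) \<in> borel_measurable N"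
proof (cases "0 \<le> t")
  case False
  then show ?thesis by simp
next
  case t: True
  define cl where "cl s = max 0 (min t s)" for s :: real
  have cl_id: "s \<in> {0..t} \<Longrightarrow> cl s = s" for s unfolding cl_def by auto
  define fl where "fl = (\<lambda>p. f (cl (snd p)) (fst p))"
  have fl: "fl \<in> borel_measurable (N \<Otimes>\<^sub>M lborel)"
    using borel_measurable_clamped_param[OF t meas cont] unfolding fl_def cl_def .
  have "(\<lambda>\<omega>. LINT s|lborel. indicator {0..t} s *\<^sub>R f (cl s) \<omega>) \<in> borel_measurable N"
  proof (rule lborel.borel_measurable_lebesgue_integral)
    show "(\<lambda>(\<omega>, s). indicator {0..t} s *\<^sub>R f (cl s) \<omega>) \<in> borel_measurable (N \<Otimes>\<^sub>M lborel)"
      using fl unfolding fl_def split_beta' by measurable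
  qed
  moreover have "integral {0..t} (\<lambda>s. f s \<omega>) = (LINT s|lborel. indicator {0..t} s *\<^sub>R f (cl s) \<omega>)"
    if \<omega>: "\<omega> \<in> space N" for \<omega>
  proof -
    have c: "continuous_on {0..t} (\<lambda>s. f (cl s) \<omega>)"
      using cont[OF \<omega>] by (rule continuous_on_eq) (simp add: cl_id)
    have "(LINT s:{0..t}|lborel. f (cl s) \<omega>) = integral {0..t} (\<lambda>s. f (cl s) \<omega>)"
      by (rule set_borel_integral_eq_integral(2)[OF borel_integrable_atLeastAtMost'[OF c]])
    also have "\<dots> = integral {0..t} (\<lambda>s. f s \<omega>)" by (rule integral_cong) (simp add: cl_id)
    finally show ?thesis by (simp add: set_lebesgue_integral_def)
  qed
  ultimately show ?thesis by (subst measurable_cong) auto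
qed

definition filtration_measure :: "'w measure \<Rightarrow> (real \<Rightarrow> 'w \<Rightarrow> 'a::euclidean_space) \<Rightarrow> real \<Rightarrow> 'w measure" where
  "filtration_measure M B t =
     sigma (space M) ({B s -` A \<inter> space M | s A. 0 \<le> s \<and> s \<le> t \<and> A \<in> sets borel} \<union> null_sets M)"

lemma filtration_generators_subset:
  "{B s -` A \<inter> space M | s A. 0 \<le> s \<and> s \<le> t \<and> A \<in> sets borel} \<union> null_sets M \<subseteq> Pow (space M)"
  using sets.sets_into_space by auto

lemma space_filtration_measure [simp]: "space (filtration_measure M B t) = space M"
  unfolding filtration_measure_def by (rule space_measure_of[OF filtration_generators_subset])

lemma sets_filtration_measure: "sets (filtration_measure M B t) = BM_filtration M B t"
  unfolding filtration_measure_def BM_filtration_def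
  by (rule sets_measure_of[OF filtration_generators_subset])

lemma measurable_filtration_mono:
  assumes "s \<le> t" "f \<in> borel_measurable (filtration_measure M B s)"
  shows "f \<in> borel_measurable (filtration_measure M B t)"
proof -
  have "{B u -` A \<inter> space M | u A. 0 \<le> u \<and> u \<le> s \<and> A \<in> sets borel} \<union> null_sets M
      \<subseteq> {B u -` A \<inter> space M | u A. 0 \<le> u \<and> u \<le> t \<and> A \<in> sets borel} \<union> null_sets M"
    using assms(1) by fastforce
  then have "sets (filtration_measure M B s) \<subseteq> sets (filtration_measure M B t)"
    unfolding sets_filtration_measure BM_filtration_def by (rule sigma_sets_subseteq)
  then show ?thesis
    using assms(2) measurable_mono[of borel borel "filtration_measure M B s" "filtration_measure M B t"]
    by auto
qed

lemma measurable_filtration_path: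
  fixes B :: "real \<Rightarrow> 'w \<Rightarrow> 'a::euclidean_space"
  assumes "0 \<le> s" "s \<le> t"
  shows "B s \<in> borel_measurable (filtration_measure M B t)"
proof (rule measurableI)
  fix A :: "'a set" assume "A \<in> sets borel"
  then show "B s -` A \<inter> space (filtration_measure M B t) \<in> sets (filtration_measure M B t)"
    unfolding space_filtration_measure sets_filtration_measure BM_filtration_def
    using assms by (intro sigma_sets.Basic) blast
qed auto

lemma measurable_picard_iter:
  fixes B :: "real \<Rightarrow> 'w \<Rightarrow> 'a::euclidean_space"
  assumes picard: "\<And>\<omega>. \<omega> \<in> space M \<Longrightarrow> picard g F r L (\<lambda>s. B s \<omega>)"
    and F: "continuous_on UNIV F" and t: "0 \<le> t"
  shows "(\<lambda>\<omega>. picard_iter g F x m r (\<lambda>s. B s \<omega>) k t) \<in> borel_measurable (filtration_measure M B t)"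
  using t
proof (induction k arbitrary: t)
  case 0
  then show ?case by simp
next
  case (Suc k)
  let ?P = "\<lambda>\<omega>. picard_iter g F x m r (\<lambda>s. B s \<omega>) k"
  have mean: "(\<lambda>\<omega>. running_mean r m (?P \<omega>) s) \<in> borel_measurable (filtration_measure M B s)"
    if s: "0 \<le> s" for s
  proof -
    have "(\<lambda>\<omega>. integral {0..s} (?P \<omega>)) \<in> borel_measurable (filtration_measure M B s)"
    proof (rule borel_measurable_integral_Icc_param)
      show "(\<lambda>\<omega>. ?P \<omega> u) \<in> borel_measurable (filtration_measure M B s)" if "u \<in> {0..s}" for u
        using that by (intro measurable_filtration_mono[OF _ Suc.IH]) auto
      show "continuous_on {0..s} (?P \<omega>)" if "\<omega> \<in> space (filtration_measure M B s)" for \<omega>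
        using picard.continuous_on_picard_iter[OF picard] that by simp
    qed
    then show ?thesis unfolding running_mean_def by measurable
  qed
  have "(\<lambda>\<omega>. g s *\<^sub>R F (?P \<omega> s - running_mean r m (?P \<omega>) s)) \<in> borel_measurable (filtration_measure M B t)"
    if s: "s \<in> {0..t}" for s
  proof -
    have "(\<lambda>\<omega>. ?P \<omega> s - running_mean r m (?P \<omega>) s) \<in> borel_measurable (filtration_measure M B s)"
      using s Suc.IH[of s] mean[of s] by (intro borel_measurable_diff) auto
    then have "(\<lambda>\<omega>. g s *\<^sub>R F (?P \<omega> s - running_mean r m (?P \<omega>) s))
        \<in> borel_measurable (filtration_measure M B s)"
      by (intro borel_measurable_scaleR borel_measurable_const borel_measurable_continuous_on[OF F])
    then show ?thesis by (rule measurable_filtration_mono[rotated]) (use s in simp)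
  qed
  then have "(\<lambda>\<omega>. integral {0..t} (\<lambda>s. g s *\<^sub>R F (?P \<omega> s - running_mean r m (?P \<omega>) s)))
      \<in> borel_measurable (filtration_measure M B t)"
    using picard.continuous_on_picard_integrand[OF picard]
    by (intro borel_measurable_integral_Icc_param) auto
  moreover have "B t \<in> borel_measurable (filtration_measure M B t)"
    using Suc.prems by (intro measurable_filtration_path) auto
  ultimately show ?case unfolding picard_iter.simps picard_map_def
    by (intro borel_measurable_diff borel_measurable_add borel_measurable_const)
qed

lemma measurable_picard_limit:
  fixes B :: "real \<Rightarrow> 'w \<Rightarrow> 'a::euclidean_space"
  assumes picard: "\<And>\<omega>. \<omega> \<in> space M \<Longrightarrow> picard g F r L (\<lambda>s. B s \<omega>)"
    and F: "continuous_on UNIV F" and t: "0 \<le> t"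
  shows "(\<lambda>\<omega>. picard_limit g F x m r (\<lambda>s. B s \<omega>) t) \<in> borel_measurable (filtration_measure M B t)"
  using picard.picard_iter_tendsto[OF picard t]
  by (intro borel_measurable_LIMSEQ_metric[OF measurable_picard_iter[OF picard F t]]) auto

context mean_field_drift
begin

lemma strong_solution_pathwise_solution:
  fixes B :: "real \<Rightarrow> 'w \<Rightarrow> 'a"
  assumes paths: "\<And>\<omega>. \<omega> \<in> space M \<Longrightarrow> continuous_on {0..} (\<lambda>t. B t \<omega>)"
  shows "strong_solution M B g F x m r (\<lambda>t \<omega>. pathwise_solution g F x m r (\<lambda>s. B s \<omega>) t)"
  unfolding strong_solution_def
proof (intro conjI ballI allI impI AE_I2)
  fix \<omega> assume "\<omega> \<in> space M"
  then show "continuous_on {0..} (\<lambda>t. pathwise_solution g F x m r (\<lambda>s. B s \<omega>) t)"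
    by (rule continuous_on_pathwise_solution[OF paths])
next
  fix t :: real and A :: "'a set" assume t: "0 \<le> t" and A: "A \<in> sets borel"
  have "(\<lambda>\<omega>. pathwise_solution g F x m r (\<lambda>s. B s \<omega>) t) \<in> borel_measurable (filtration_measure M B t)"
  proof (rule borel_measurable_LIMSEQ_metric)
    fix n :: nat
    obtain L where L: "L-lipschitz_on (cball 0 (real n)) F" using F_lipschitz_on_cball by blast
    show "(\<lambda>\<omega>. picard_limit g (truncation (real n) F) x m r (\<lambda>s. B s \<omega>) t)
        \<in> borel_measurable (filtration_measure M B t)"
      using picard_truncation[OF L] paths lipschitz_on_continuous_on[OF lipschitz_on_truncation[OF L]] t
      by (intro measurable_picard_limit) auto
  next
    fix \<omega> assume "\<omega> \<in> space (filtration_measure M B t)"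
    then show "(\<lambda>n. picard_limit g (truncation (real n) F) x m r (\<lambda>s. B s \<omega>) t)
        \<longlonglongrightarrow> pathwise_solution g F x m r (\<lambda>s. B s \<omega>) t"
      using truncated_picard_limit_tendsto[OF paths t] by simp
  qed
  from measurable_sets[OF this A]
  show "(\<lambda>\<omega>. pathwise_solution g F x m r (\<lambda>s. B s \<omega>) t) -` A \<inter> space M \<in> BM_filtration M B t"
    by (simp add: sets_filtration_measure)
next
  fix \<omega> and t :: real assume "\<omega> \<in> space M" "0 \<le> t"
  then show "pathwise_solution g F x m r (\<lambda>s. B s \<omega>) t = x + B t \<omega> - integral {0..t} (\<lambda>s. g s *\<^sub>R
      F (pathwise_solution g F x m r (\<lambda>s. B s \<omega>) s - (1 / (r + s)) *\<^sub>R
        (r *\<^sub>R m + integral {0..s} (\<lambda>u. pathwise_solution g F x m r (\<lambda>s. B s \<omega>) u))))"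
    using pathwise_solution_fixed_point[OF paths] unfolding picard_map_def running_mean_def by simp
qed

lemma strong_solution_unique:
  fixes B :: "real \<Rightarrow> 'w \<Rightarrow> 'a"
  assumes paths: "\<And>\<omega>. \<omega> \<in> space M \<Longrightarrow> continuous_on {0..} (\<lambda>t. B t \<omega>)"
    and Y: "strong_solution M B g F x m r Y"
  shows "AE \<omega> in M. \<forall>t\<ge>0. pathwise_solution g F x m r (\<lambda>s. B s \<omega>) t = Y t \<omega>"
proof -
  have Y_cont: "\<And>\<omega>. \<omega> \<in> space M \<Longrightarrow> continuous_on {0..} (\<lambda>t. Y t \<omega>)"
    and Y_ae: "AE \<omega> in M. \<forall>t\<ge>0. Y t \<omega> = picard_map g F x m r (\<lambda>s. B s \<omega>) (\<lambda>t. Y t \<omega>) t"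
    using Y unfolding strong_solution_def picard_map_def running_mean_def by auto
  show ?thesis
  proof (rule AE_mp[OF Y_ae AE_I2], intro impI allI)
    fix \<omega> and t :: real assume \<omega>: "\<omega> \<in> space M" and t: "0 \<le> t"
      and Y_fix: "\<forall>t\<ge>0. Y t \<omega> = picard_map g F x m r (\<lambda>s. B s \<omega>) (\<lambda>t. Y t \<omega>) t"
    have "Y t \<omega> = pathwise_solution g F x m r (\<lambda>s. B s \<omega>) t"
      using Y_fix t continuous_on_subset[OF Y_cont[OF \<omega>]]
      by (intro pathwise_solution_unique[OF paths[OF \<omega>], of t "\<lambda>t. Y t \<omega>"]) auto
    then show "pathwise_solution g F x m r (\<lambda>s. B s \<omega>) t = Y t \<omega>" ..
  qed
qed

end

section \<open>The gradient of the potential\<close>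

lemma gradient_eqI:
  fixes u v :: "'a::real_inner"
  assumes "(f has_derivative (\<lambda>h. u \<bullet> h)) (at y)" "(f has_derivative (\<lambda>h. v \<bullet> h)) (at y)"
  shows "u = v"
proof -
  have "(\<lambda>h. u \<bullet> h) = (\<lambda>h. v \<bullet> h)" by (rule has_derivative_unique[OF assms])
  then have "(u - v) \<bullet> (u - v) = 0" by (simp add: inner_diff_left fun_eq_iff)
  then show ?thesis by simp
qed

lemma strongly_monotone_of_hessian:
  fixes DW :: "'a::euclidean_space \<Rightarrow> 'a"
  assumes hess: "\<And>y. (DW has_derivative blinfun_apply (HW y)) (at y)"
    and convex: "\<And>y h. c * (norm h)\<^sup>2 \<le> blinfun_apply (HW y) h \<bullet> h"
  shows "c * (norm (u - v))\<^sup>2 \<le> (DW u - DW v) \<bullet> (u - v)"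
proof -
  define d where "d = u - v"
  define \<phi> where "\<phi> \<tau> = DW (v + \<tau> *\<^sub>R d) \<bullet> d" for \<tau> :: real
  have deriv: "(\<phi> has_derivative (\<lambda>h. blinfun_apply (HW (v + \<tau> *\<^sub>R d)) (h *\<^sub>R d) \<bullet> d))
      (at \<tau> within {0..1})" for \<tau>
  proof -
    have "((\<lambda>\<tau>::real. v + \<tau> *\<^sub>R d) has_derivative (\<lambda>h. h *\<^sub>R d)) (at \<tau> within {0..1})"
      by (auto intro!: derivative_eq_intros)
    from has_derivative_compose[OF this hess] show ?thesis
      unfolding \<phi>_def by (rule has_derivative_inner_left)
  qed
  obtain \<xi> where "\<phi> 1 - \<phi> 0 = blinfun_apply (HW (v + \<xi> *\<^sub>R d)) ((1 - 0) *\<^sub>R d) \<bullet> d"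
    using mvt_simple[of 0 1 \<phi>, OF _ deriv] by auto
  moreover have "\<phi> 1 - \<phi> 0 = (DW u - DW v) \<bullet> (u - v)"
    unfolding \<phi>_def d_def by (simp add: inner_diff_left)
  ultimately show ?thesis using convex[where y = "v + \<xi> *\<^sub>R d" and h = d] unfolding d_def by simp
qed

lemma bounded_gradient_of_compact_support:
  fixes chi :: "'a::euclidean_space \<Rightarrow> real"
  assumes supp: "compact (closure {y. chi y \<noteq> 0})"
    and grad: "\<And>y. (chi has_derivative (\<lambda>h. Dchi y \<bullet> h)) (at y)"
    and lip: "\<exists>L. \<forall>y z. norm (Dchi y - Dchi z) \<le> L * dist y z"
  obtains C where "0 \<le> C" "\<And>y. norm (Dchi y) \<le> C"
proof -
  define K where "K = closure {y. chi y \<noteq> 0}"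
  obtain L where L: "\<And>y z. norm (Dchi y - Dchi z) \<le> L * dist y z" using lip by blast
  have "dist (Dchi y) (Dchi z) \<le> \<bar>L\<bar> * dist y z" for y z
    using order_trans[OF L mult_right_mono[OF abs_ge_self zero_le_dist]] by (simp add: dist_norm)
  then have "\<bar>L\<bar>-lipschitz_on UNIV Dchi" by (intro lipschitz_onI) auto
  then have "continuous_on K Dchi" by (rule continuous_on_subset[OF lipschitz_on_continuous_on]) simp
  then obtain C where C: "0 \<le> C" "\<And>y. y \<in> K \<Longrightarrow> norm (Dchi y) \<le> C"
    using continuous_on_compact_bound[OF supp[folded K_def]] by blast
  have outside: "Dchi y = 0" if y: "y \<notin> K" for y
  proof -
    have zero: "chi z = 0" if "z \<in> - K" for z
      using closure_subset[of "{y. chi y \<noteq> 0}"] that unfolding K_def by auto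
    have "open (- K)" unfolding K_def by blast
    then have "((\<lambda>_. 0) has_derivative (\<lambda>h. Dchi y \<bullet> h)) (at y)"
      by (rule has_derivative_transform_within_open[OF grad _ _ zero]) (use y in simp)
    moreover have "((\<lambda>_. 0::real) has_derivative (\<lambda>h. 0 \<bullet> h)) (at y)" by simp
    ultimately show ?thesis by (rule gradient_eqI)
  qed
  show ?thesis
  proof (rule that[OF C(1)])
    fix y show "norm (Dchi y) \<le> C" using C outside by (cases "y \<in> K") auto
  qed
qed

lemma lipschitz_on_cball_of_derivative:
  fixes DV :: "'a::euclidean_space \<Rightarrow> 'a"
  assumes deriv: "\<And>y. (DV has_derivative blinfun_apply (HV y)) (at y)"
    and cont: "continuous_on UNIV HV"
  shows "\<exists>L. L-lipschitz_on (cball 0 R) DV"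
proof -
  obtain L where L: "0 \<le> L" "\<And>y. y \<in> cball 0 R \<Longrightarrow> norm (HV y) \<le> L"
    using continuous_on_compact_bound[OF compact_cball continuous_on_subset[OF cont]] by blast
  have "norm (DV y - DV z) \<le> L * norm (y - z)" if "y \<in> cball 0 R" "z \<in> cball 0 R" for y z
  proof (rule differentiable_bound[OF convex_cball _ _ that])
    show "(DV has_derivative blinfun_apply (HV u)) (at u within cball 0 R)" for u
      using deriv by (rule has_derivative_at_withinI)
    show "onorm (blinfun_apply (HV u)) \<le> L" if "u \<in> cball 0 R" for u
      using L(2)[OF that] by (simp add: norm_blinfun.rep_eq[symmetric])
  qed
  then have "L-lipschitz_on (cball 0 R) DV" using L(1) by (intro lipschitz_onI) (auto simp: dist_norm)
  then show ?thesis ..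
qed

lemma inner_diff_ge_of_bounded_perturbation:
  fixes F G D :: "'a::real_inner \<Rightarrow> 'a"
  assumes split: "\<And>y. F y = G y + D y"
    and G: "c * (norm (u - v))\<^sup>2 \<le> (G u - G v) \<bullet> (u - v)"
    and D: "\<And>y. norm (D y) \<le> C"
  shows "c * (norm (u - v))\<^sup>2 - 2 * C * norm (u - v) \<le> (F u - F v) \<bullet> (u - v)"
proof -
  have "\<bar>(D u - D v) \<bullet> (u - v)\<bar> \<le> norm (D u - D v) * norm (u - v)" by (rule Cauchy_Schwarz_ineq2)
  also have "\<dots> \<le> 2 * C * norm (u - v)"
    using norm_triangle_ineq4[of "D u" "D v"] D[of u] D[of v] by (intro mult_right_mono) auto
  finally have "\<bar>(D u - D v) \<bullet> (u - v)\<bar> \<le> 2 * C * norm (u - v)" .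
  moreover have "(F u - F v) \<bullet> (u - v) = (G u - G v) \<bullet> (u - v) + (D u - D v) \<bullet> (u - v)"
    unfolding split by (simp add: inner_diff_left inner_add_left)
  ultimately show ?thesis using G by linarith
qed

lemma coercive_gradient:
  fixes V W chi :: "'a::euclidean_space \<Rightarrow> real" and DV DW Dchi :: "'a \<Rightarrow> 'a"
    and HW :: "'a \<Rightarrow> 'a \<Rightarrow>\<^sub>L 'a"
  assumes V_grad: "\<And>y. (V has_derivative (\<lambda>h. DV y \<bullet> h)) (at y)"
    and V_split: "\<And>y. V y = W y + chi y"
    and chi_supp: "compact (closure {y. chi y \<noteq> 0})"
    and chi_grad: "\<And>y. (chi has_derivative (\<lambda>h. Dchi y \<bullet> h)) (at y)"
    and chi_lip: "\<exists>L. \<forall>y z. norm (Dchi y - Dchi z) \<le> L * dist y z"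
    and W_grad: "\<And>y. (W has_derivative (\<lambda>h. DW y \<bullet> h)) (at y)"
    and W_hess: "\<And>y. (DW has_derivative blinfun_apply (HW y)) (at y)"
    and W_convex: "\<And>y h. c * (norm h)\<^sup>2 \<le> blinfun_apply (HW y) h \<bullet> h"
  obtains C where "0 \<le> C" "\<And>u v. c * (norm (u - v))\<^sup>2 - C * norm (u - v) \<le> (DV u - DV v) \<bullet> (u - v)"
proof -
  obtain Cx where Cx: "0 \<le> Cx" "\<And>y. norm (Dchi y) \<le> Cx"
    using bounded_gradient_of_compact_support[OF chi_supp chi_grad chi_lip] by blast
  have DV_split: "DV y = DW y + Dchi y" for y
  proof (rule gradient_eqI[OF V_grad])
    have "V = (\<lambda>y. W y + chi y)" using V_split by auto
    then show "(V has_derivative (\<lambda>h. (DW y + Dchi y) \<bullet> h)) (at y)"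
      using has_derivative_add[OF W_grad chi_grad] by (simp add: inner_add_left)
  qed
  show ?thesis
  proof (rule that[OF _ inner_diff_ge_of_bounded_perturbation[OF DV_split
          strongly_monotone_of_hessian[OF W_hess W_convex] Cx(2)]])
    show "0 \<le> 2 * Cx" using Cx(1) by simp
  qed
qed

theorem mainTheorem9:
  fixes V W chi :: "'a::euclidean_space \<Rightarrow> real"
    and DV DW Dchi :: "'a \<Rightarrow> 'a"
    and HV HW :: "'a \<Rightarrow> 'a \<Rightarrow>\<^sub>L 'a"
    and g g' :: "real \<Rightarrow> real"
    and \<mu> :: "'a measure"
    and M :: "'w measure"
    and B :: "real \<Rightarrow> 'w \<Rightarrow> 'a"
    and x :: 'a and r c a :: real
  assumes V_nonneg: "\<And>y. V y \<ge> 0"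
    and V_grad: "\<And>y. (V has_derivative (\<lambda>h. DV y \<bullet> h)) (at y)"
    and V_hess: "\<And>y. (DV has_derivative blinfun_apply (HV y)) (at y)"
    and V_C2: "continuous_on UNIV HV"
    and V_split: "\<And>y. V y = W y + chi y"
    and chi_supp: "compact (closure {y. chi y \<noteq> 0})"
    and chi_grad: "\<And>y. (chi has_derivative (\<lambda>h. Dchi y \<bullet> h)) (at y)"
    and chi_lip: "\<exists>L. \<forall>y z. norm (Dchi y - Dchi z) \<le> L * dist y z"
    and W_grad: "\<And>y. (W has_derivative (\<lambda>h. DW y \<bullet> h)) (at y)"
    and W_hess: "\<And>y. (DW has_derivative blinfun_apply (HW y)) (at y)"
    and c_pos: "c > 0"
    and W_convex: "\<And>y h. blinfun_apply (HW y) h \<bullet> h \<ge> c * (norm h)\<^sup>2"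
    and a_pos: "a > 0"
    and lap_bound: "\<And>y. (\<Sum>b\<in>Basis. blinfun_apply (HV y) b \<bullet> b) \<le> a * (1 + V y)"
    and grad_growth: "filterlim (\<lambda>y. (norm (DV y))\<^sup>2 / V y) at_top at_infinity"
    and crit_finite: "finite {y. DV y = 0}"
    and min_nondeg: "\<And>y. DV y = 0 \<Longrightarrow> local_min V y \<Longrightarrow>
                        (\<forall>h. h \<noteq> 0 \<longrightarrow> blinfun_apply (HV y) h \<bullet> h > 0)"
    and saddle_neg: "\<And>y. DV y = 0 \<Longrightarrow> \<not> local_min V y \<Longrightarrow>
                        (\<exists>lam<0. \<exists>v. v \<noteq> 0 \<and> blinfun_apply (HV y) v = lam *\<^sub>R v)"
    and g_C1: "\<And>t. t \<ge> 0 \<Longrightarrow> (g has_real_derivative g' t) (at t within {0..})"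
    and g'_cont: "continuous_on {0..} g'"
    and g_pos: "\<And>t. t \<ge> 0 \<Longrightarrow> g t > 0"
    and g_mono: "mono_on {0..} g"
    and mu_prob: "prob_space \<mu>"
    and mu_borel: "sets \<mu> = sets borel"
    and mu_mean: "integrable \<mu> (\<lambda>y. y)"
    and r_pos: "r > 0"
    and BM: "std_BM M B"
  shows "\<exists>X. strong_solution M B g DV x (integral\<^sup>L \<mu> (\<lambda>y. y)) r X \<and>
             (\<forall>Y. strong_solution M B g DV x (integral\<^sup>L \<mu> (\<lambda>y. y)) r Y \<longrightarrow>
                  (AE \<omega> in M. \<forall>t\<ge>0. X t \<omega> = Y t \<omega>))"
proof -
  obtain C where C: "0 \<le> C" "\<And>u v. c * (norm (u - v))\<^sup>2 - C * norm (u - v) \<le> (DV u - DV v) \<bullet> (u - v)"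
    using coercive_gradient[OF V_grad V_split chi_supp chi_grad chi_lip W_grad W_hess W_convex] by blast
  have g_cont: "continuous_on {0..} g"
    unfolding continuous_on_eq_continuous_within using g_C1 by (auto intro: DERIV_continuous)
  interpret mean_field_drift DV c C g "g 0" r
  proof
    show "g 0 \<le> g t" if "0 \<le> t" for t using mono_onD[OF g_mono, of 0 t] that by auto
  qed (use lipschitz_on_cball_of_derivative[OF V_hess V_C2] C c_pos r_pos g_cont g_pos in auto)
  have paths: "\<And>\<omega>. \<omega> \<in> space M \<Longrightarrow> continuous_on {0..} (\<lambda>t. B t \<omega>)"
    using BM unfolding std_BM_def by auto
  let ?m = "integral\<^sup>L \<mu> (\<lambda>y. y)"
  let ?X = "\<lambda>t \<omega>. pathwise_solution g DV x ?m r (\<lambda>s. B s \<omega>) t"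
  have "strong_solution M B g DV x ?m r ?X" by (rule strong_solution_pathwise_solution[OF paths])
  moreover have "AE \<omega> in M. \<forall>t\<ge>0. ?X t \<omega> = Y t \<omega>" if "strong_solution M B g DV x ?m r Y" for Y
    using strong_solution_unique[OF paths that] by simp
  ultimately show ?thesis by blast
qed

end
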